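(* Let $\theta\in(0,\pi)$. Then for all $x,y\in S_\theta$, $$\frac{p_{S_\theta}(x,y)}{\sqrt2\cos(\theta/4)}\le s_{S_\theta}(x,y),$$ and the constant is sharp.
   Context: $S_\theta=\{x\in\mathbb{C}:0<\arg(x)<\theta\}$. For a domain $G\subsetneq\mathbb{C}$, $d_G(x)=\inf\{|x-z|:z\in\partial G\}$, $s_G(x,y)=\frac{|x-y|}{\inf_{z\in\partial G}(|x-z|+|z-y|)}$, $p_G(x,y)=\frac{|x-y|}{\sqrt{|x-y|^2+4d_G(x)d_G(y)}}$. *)

theory Defs
  imports "HOL-Complex_Analysis.Complex_Analysis"
begin

definition sector :: "real \<Rightarrow> complex set" where
  "sector \<theta> = {x. 0 < Arg x \<and> Arg x < \<theta>}"

definition dG :: "complex set \<Rightarrow> complex \<Rightarrow> real" where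
  "dG G x = infdist x (frontier G)"

definition sG :: "complex set \<Rightarrow> complex \<Rightarrow> complex \<Rightarrow> real" where
  "sG G x y = cmod (x - y) / (INF z\<in>frontier G. cmod (x - z) + cmod (z - y))"

definition pG :: "complex set \<Rightarrow> complex \<Rightarrow> complex \<Rightarrow> real" where
  "pG G x y = cmod (x - y) / sqrt ((cmod (x - y))\<^sup>2 + 4 * dG G x * dG G y)"

end

theory Submission
  imports Defs
begin

text \<open>The reflection in the bisector swaps the two edges of the sector, so the distances of a
  point x to the two edge lines are a = Im x and b = Im (bisector_refl \<theta> x), and d(x) \<ge> min a b.
  By the mirror principle the shortest path from x via the boundary to y has length
  sqrt (|x - y|^2 + 4 min (a c) (b e)) (c, e the edge distances of y), which gives s in closed form.
  The bound therefore reduces to a real inequality whose only nontrivial case is x and y lying on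
  opposite sides of the bisector. There b - a and c - e are 2 cos (\<theta>/2) times the distances of x
  and y to the bisector, whose sum is at most |x - y|, and AM-GM produces the factor
  1 + cos (\<theta>/2) = 2 cos (\<theta>/4)^2. Equality holds for x = cis (\<theta>/4) and y = cis (3\<theta>/4).\<close>

text \<open>Im (bisector_refl \<theta> z) is the signed distance from z to the line through cis \<theta>,
  just as Im z is the signed distance to the real axis.\<close>

definition bisector_refl :: "real \<Rightarrow> complex \<Rightarrow> complex" where
  "bisector_refl \<theta> z = cis \<theta> * cnj z"

lemma Im_bisector_refl: "Im (bisector_refl \<theta> z) = Re z * sin \<theta> - Im z * cos \<theta>"
  by (simp add: bisector_refl_def)

lemma bisector_refl_bisector_refl [simp]: "bisector_refl \<theta> (bisector_refl \<theta> z) = z"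
  by (simp add: bisector_refl_def cis_cnj mult.assoc[symmetric] cis_mult)

lemma dist_bisector_refl: "cmod (bisector_refl \<theta> a - bisector_refl \<theta> b) = cmod (a - b)"
  by (metis bisector_refl_def complex_cnj_diff complex_mod_cnj norm_cis norm_mult
      right_diff_distrib mult_1)

lemma bisector_refl_cis: "bisector_refl \<theta> (cis a) = cis (\<theta> - a)"
  by (simp add: bisector_refl_def cis_cnj cis_mult)

lemma abs_Im_bisector_refl_diff_le:
  "\<bar>Im (bisector_refl \<theta> a) - Im (bisector_refl \<theta> b)\<bar> \<le> cmod (a - b)"
  using abs_Im_le_cmod[of "bisector_refl \<theta> a - bisector_refl \<theta> b"]
  by (simp add: dist_bisector_refl)

lemma sector_iff:
  assumes "0 < \<theta>" "\<theta> < pi"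
  shows "z \<in> sector \<theta> \<longleftrightarrow> 0 < Im z \<and> 0 < Im (bisector_refl \<theta> z)"
proof (cases "z = 0")
  case False
  have "Im (bisector_refl \<theta> z) = cmod z * sin (\<theta> - Arg z)"
    using False by (simp add: Im_bisector_refl sin_diff cos_Arg sin_Arg algebra_simps)
  moreover have "0 < Im z \<longleftrightarrow> 0 < Arg z \<and> Arg z < pi"
    using False Arg_lt_pi by blast
  moreover have "0 < sin (\<theta> - Arg z) \<longleftrightarrow> Arg z < \<theta>" if "0 < Arg z" "Arg z < pi"
  proof
    assume "0 < sin (\<theta> - Arg z)"
    moreover have "0 \<le> sin (Arg z - \<theta>)" if "\<theta> \<le> Arg z"
      using that \<open>Arg z < pi\<close> assms by (intro sin_ge_zero) auto
    ultimately show "Arg z < \<theta>"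
      by (metis minus_diff_eq neg_0_less_iff_less not_le sin_minus)
  qed (use that assms in \<open>intro sin_gt_zero, auto\<close>)
  ultimately show ?thesis
    using False assms by (auto simp: sector_def zero_less_mult_iff)
qed (simp add: sector_def bisector_refl_def Arg_zero)

lemma bisector_refl_in_sector:
  assumes "0 < \<theta>" "\<theta> < pi" "z \<in> sector \<theta>"
  shows "bisector_refl \<theta> z \<in> sector \<theta>"
  using assms by (simp add: sector_iff)

lemma cis_in_sector:
  assumes "0 < a" "a < \<theta>" "\<theta> < pi"
  shows "cis a \<in> sector \<theta>"
  using assms by (simp add: sector_iff bisector_refl_cis sin_gt_zero)

lemma open_sector:
  assumes "0 < \<theta>" "\<theta> < pi"
  shows "open (sector \<theta>)"
proof -
  have "sector \<theta> = {z. 0 < Im z \<and> 0 < Re z * sin \<theta> - Im z * cos \<theta>}"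
    using assms by (auto simp: sector_iff Im_bisector_refl)
  then show ?thesis
    by (simp only: open_Collect_conj open_Collect_less continuous_intros)
qed

lemma frontier_sector_cases:
  assumes "0 < \<theta>" "\<theta> < pi" "z \<in> frontier (sector \<theta>)"
  shows "Im z \<le> 0 \<or> Im (bisector_refl \<theta> z) \<le> 0"
  using assms open_sector[OF assms(1,2)]
  by (auto simp: frontier_def interior_open sector_iff)

lemma frontier_sectorI:
  assumes "0 < \<theta>" "\<theta> < pi" "0 \<le> Im z" "0 \<le> Im (bisector_refl \<theta> z)"
    and "Im z = 0 \<or> Im (bisector_refl \<theta> z) = 0"
  shows "z \<in> frontier (sector \<theta>)"
proof -
  have "z \<in> closure (sector \<theta>)"
    unfolding closure_approachable
  proof (intro allI impI)
    fix e :: real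
    assume "0 < e"
    let ?w = "z + of_real (e / 2) * cis (\<theta> / 2)"
    have "0 < sin (\<theta> / 2)"
      using assms by (intro sin_gt_zero) auto
    moreover have "Im (bisector_refl \<theta> ?w) = Im (bisector_refl \<theta> z) + e / 2 * sin (\<theta> / 2)"
      using sin_diff[of \<theta> "\<theta> / 2"]
      by (simp add: Im_bisector_refl algebra_simps) (metis distrib_left)
    ultimately have "?w \<in> sector \<theta>"
      using assms \<open>0 < e\<close> by (simp add: sector_iff add_nonneg_pos)
    moreover have "dist ?w z < e"
      using \<open>0 < e\<close> by (simp add: dist_norm norm_mult)
    ultimately show "\<exists>w\<in>sector \<theta>. dist w z < e"
      by blast
  qed
  moreover have "z \<notin> interior (sector \<theta>)"
    using assms open_sector[OF assms(1,2)] by (auto simp: interior_open sector_iff)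
  ultimately show ?thesis
    by (simp add: frontier_def)
qed

lemma edges_in_frontier_sector:
  assumes "0 < \<theta>" "\<theta> < pi" "0 \<le> t"
  shows "of_real t \<in> frontier (sector \<theta>)"
    and "bisector_refl \<theta> (of_real t) \<in> frontier (sector \<theta>)"
proof -
  have "0 \<le> t * sin \<theta>"
    using assms by (simp add: sin_ge_zero)
  then show "of_real t \<in> frontier (sector \<theta>)"
    and "bisector_refl \<theta> (of_real t) \<in> frontier (sector \<theta>)"
    using assms by (auto intro!: frontier_sectorI simp: Im_bisector_refl)
qed

lemma dG_sector_ge:
  assumes "0 < \<theta>" "\<theta> < pi" "x \<in> sector \<theta>"
  shows "min (Im x) (Im (bisector_refl \<theta> x)) \<le> dG (sector \<theta>) x"
proof -
  have "frontier (sector \<theta>) \<noteq> {}"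
    using edges_in_frontier_sector(1)[OF assms(1,2), of 0] by auto
  moreover have "min (Im x) (Im (bisector_refl \<theta> x)) \<le> dist x z"
    if "z \<in> frontier (sector \<theta>)" for z
    using frontier_sector_cases[OF assms(1,2) that] abs_Im_le_cmod[of "x - z"]
      abs_Im_bisector_refl_diff_le[of \<theta> x z]
    by (auto simp: dist_norm)
  ultimately show ?thesis
    unfolding dG_def by (simp add: infdist_notempty cINF_greatest)
qed

lemma cmod_diff_cnj_sq: "(cmod (a - cnj b))\<^sup>2 = (cmod (a - b))\<^sup>2 + 4 * Im a * Im b"
  unfolding cmod_power2 by (simp add: power2_eq_square algebra_simps)

lemma cmod_diff_cnj_eq_sqrt: "cmod (a - cnj b) = sqrt ((cmod (a - b))\<^sup>2 + 4 * (Im a * Im b))"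
  using arg_cong[OF cmod_diff_cnj_sq[of a b], of sqrt] by (simp add: mult.assoc)

lemma cmod_diff_cnj_le_broken_line:
  assumes "Im w \<le> 0" "0 \<le> Im b"
  shows "cmod (a - cnj b) \<le> cmod (a - w) + cmod (w - b)"
proof -
  have "(cmod (w - cnj b))\<^sup>2 \<le> (cmod (w - b))\<^sup>2"
    using cmod_diff_cnj_sq[of w b] mult_nonpos_nonneg[OF assms] by (simp add: mult.commute)
  then have "cmod (w - cnj b) \<le> cmod (w - b)"
    by (rule power2_le_imp_le) simp
  then show ?thesis
    using norm_triangle_ineq[of "a - w" "w - cnj b"] by simp
qed

lemma real_axis_crossing:
  assumes "0 < Im x" "0 < Im y"
  defines "t \<equiv> Im (x * y) / (Im x + Im y)"
  shows "cmod (x - of_real t) + cmod (of_real t - y) = cmod (x - cnj y)"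
proof -
  define s where "s = Im x + Im y"
  have "0 < s"
    using assms by (simp add: s_def)
  have x_t: "x - of_real t = of_real (Im x / s) * (x - cnj y)"
    and t_y: "of_real t - cnj y = of_real (Im y / s) * (x - cnj y)"
    using \<open>0 < s\<close> by (simp_all add: complex_eq_iff t_def s_def field_simps)
  have "cmod (of_real t - y) = cmod (of_real t - cnj y)"
    by (metis complex_cnj_complex_of_real complex_cnj_diff complex_mod_cnj)
  then have "cmod (x - of_real t) + cmod (of_real t - y) = (Im x / s + Im y / s) * cmod (x - cnj y)"
    using assms(1,2) \<open>0 < s\<close> by (simp add: x_t t_y norm_mult norm_divide distrib_right)
  also have "Im x / s + Im y / s = 1"
    using \<open>0 < s\<close> by (simp add: s_def add_divide_distrib[symmetric])
  finally show ?thesis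
    by simp
qed

lemma two_mult_le_add_if_sq_le_mult:
  fixes m u v :: real
  assumes "0 \<le> u" "0 \<le> v" "m\<^sup>2 \<le> u * v"
  shows "2 * m \<le> u + v"
  using arith_geo_mean_sqrt[OF assms(1,2)] real_le_rsqrt[OF assms(3)] by argo

lemma Im_mult_nonneg_in_sector:
  assumes "0 < \<theta>" "\<theta> < pi" "x \<in> sector \<theta>" "y \<in> sector \<theta>"
    and "Im x * Im y \<le> Im (bisector_refl \<theta> x) * Im (bisector_refl \<theta> y)"
  shows "0 \<le> Im (x * y)"
proof -
  define a b c e where "a = Im x" "b = Im (bisector_refl \<theta> x)"
    "c = Im y" "e = Im (bisector_refl \<theta> y)"
  have pos: "0 < a" "0 < b" "0 < c" "0 < e"
    using assms by (simp_all add: a_b_c_e_def sector_iff)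
  have "(a * c)\<^sup>2 \<le> (b * c) * (a * e)"
    using assms(5) pos by (simp add: a_b_c_e_def power2_eq_square mult_left_mono mult_ac)
  then have "2 * (a * c) \<le> b * c + a * e"
    using pos by (intro two_mult_le_add_if_sq_le_mult) simp_all
  moreover have "- 1 * (a * c) \<le> cos \<theta> * (a * c)"
    using pos by (intro mult_right_mono) simp_all
  moreover have "sin \<theta> * Im (x * y) = b * c + a * e + 2 * cos \<theta> * (a * c)"
    by (simp add: a_b_c_e_def Im_bisector_refl algebra_simps)
  ultimately have "0 \<le> sin \<theta> * Im (x * y)"
    by linarith
  moreover have "0 < sin \<theta>"
    using assms by (simp add: sin_gt_zero)
  ultimately show ?thesis
    by (simp add: zero_le_mult_iff)
qed

lemma real_axis_crossing_in_sector:
  assumes "0 < \<theta>" "\<theta> < pi" "x \<in> sector \<theta>" "y \<in> sector \<theta>"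
    and "Im x * Im y \<le> Im (bisector_refl \<theta> x) * Im (bisector_refl \<theta> y)"
  obtains t where "0 \<le> t" "cmod (x - of_real t) + cmod (of_real t - y) = cmod (x - cnj y)"
proof
  have "0 < Im x" "0 < Im y"
    using assms by (simp_all add: sector_iff)
  then show "cmod (x - of_real (Im (x * y) / (Im x + Im y)))
      + cmod (of_real (Im (x * y) / (Im x + Im y)) - y) = cmod (x - cnj y)"
    by (rule real_axis_crossing)
  show "0 \<le> Im (x * y) / (Im x + Im y)"
    using Im_mult_nonneg_in_sector[OF assms] \<open>0 < Im x\<close> \<open>0 < Im y\<close> by simp
qed

lemma sector_broken_line_ge:
  assumes th: "0 < \<theta>" "\<theta> < pi" and xy: "x \<in> sector \<theta>" "y \<in> sector \<theta>"
    and z: "z \<in> frontier (sector \<theta>)"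
  shows "sqrt ((cmod (x - y))\<^sup>2
      + 4 * min (Im x * Im y) (Im (bisector_refl \<theta> x) * Im (bisector_refl \<theta> y)))
    \<le> cmod (x - z) + cmod (z - y)" (is "sqrt ?R \<le> _")
proof -
  let ?r = "bisector_refl \<theta>"
  have pos: "0 < Im x" "0 < Im y" "0 < Im (?r x)" "0 < Im (?r y)"
    using xy th by (simp_all add: sector_iff)
  from frontier_sector_cases[OF th z] show ?thesis
  proof
    assume "Im z \<le> 0"
    then have "cmod (x - cnj y) \<le> cmod (x - z) + cmod (z - y)"
      using pos by (intro cmod_diff_cnj_le_broken_line) simp_all
    moreover have "sqrt ?R \<le> cmod (x - cnj y)"
      by (simp add: cmod_diff_cnj_eq_sqrt)
    ultimately show ?thesis
      by linarith
  next
    assume "Im (?r z) \<le> 0"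
    then have "cmod (?r x - cnj (?r y)) \<le> cmod (?r x - ?r z) + cmod (?r z - ?r y)"
      using pos by (intro cmod_diff_cnj_le_broken_line) simp_all
    moreover have "sqrt ?R \<le> cmod (?r x - cnj (?r y))"
      by (simp add: cmod_diff_cnj_eq_sqrt dist_bisector_refl)
    ultimately show ?thesis
      by (simp add: dist_bisector_refl)
  qed
qed

lemma sector_broken_line_attained:
  assumes th: "0 < \<theta>" "\<theta> < pi" and xy: "x \<in> sector \<theta>" "y \<in> sector \<theta>"
  obtains z where "z \<in> frontier (sector \<theta>)"
    "cmod (x - z) + cmod (z - y) = sqrt ((cmod (x - y))\<^sup>2
      + 4 * min (Im x * Im y) (Im (bisector_refl \<theta> x) * Im (bisector_refl \<theta> y)))"
proof (cases "Im x * Im y \<le> Im (bisector_refl \<theta> x) * Im (bisector_refl \<theta> y)")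
  case True
  then obtain t where "0 \<le> t" "cmod (x - of_real t) + cmod (of_real t - y) = cmod (x - cnj y)"
    using real_axis_crossing_in_sector[OF th xy] by blast
  with True show ?thesis
    by (intro that[OF edges_in_frontier_sector(1)[OF th \<open>0 \<le> t\<close>]])
      (simp add: cmod_diff_cnj_eq_sqrt min_absorb1)
next
  case False
  let ?r = "bisector_refl \<theta>"
  have "Im (?r x) * Im (?r y) \<le> Im (?r (?r x)) * Im (?r (?r y))"
    using False by simp
  then obtain t where t: "0 \<le> t"
    "cmod (?r x - of_real t) + cmod (of_real t - ?r y) = cmod (?r x - cnj (?r y))"
    using real_axis_crossing_in_sector[OF th] bisector_refl_in_sector[OF th] xy by metis
  moreover have "cmod (?r x - of_real t) = cmod (x - ?r (of_real t))"
    and "cmod (of_real t - ?r y) = cmod (?r (of_real t) - y)"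
    using dist_bisector_refl[of \<theta> x "?r (of_real t)"] dist_bisector_refl[of \<theta> "?r (of_real t)" y]
    by simp_all
  ultimately show ?thesis
    using False
    by (intro that[OF edges_in_frontier_sector(2)[OF th t(1)]])
      (simp add: cmod_diff_cnj_eq_sqrt dist_bisector_refl min_absorb2)
qed

lemma sector_broken_line_INF:
  assumes "0 < \<theta>" "\<theta> < pi" "x \<in> sector \<theta>" "y \<in> sector \<theta>"
  shows "(INF z\<in>frontier (sector \<theta>). cmod (x - z) + cmod (z - y))
    = sqrt ((cmod (x - y))\<^sup>2
      + 4 * min (Im x * Im y) (Im (bisector_refl \<theta> x) * Im (bisector_refl \<theta> y)))"
proof -
  obtain z where "z \<in> frontier (sector \<theta>)"
    "cmod (x - z) + cmod (z - y) = sqrt ((cmod (x - y))\<^sup>2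
      + 4 * min (Im x * Im y) (Im (bisector_refl \<theta> x) * Im (bisector_refl \<theta> y)))"
    using sector_broken_line_attained[OF assms] by blast
  then show ?thesis
    using sector_broken_line_ge[OF assms]
    by (intro antisym cINF_lower2[OF bdd_belowI[of _ 0]] cINF_greatest) auto
qed

lemma sG_sector:
  assumes "0 < \<theta>" "\<theta> < pi" "x \<in> sector \<theta>" "y \<in> sector \<theta>"
  shows "sG (sector \<theta>) x y = cmod (x - y) / sqrt ((cmod (x - y))\<^sup>2
    + 4 * min (Im x * Im y) (Im (bisector_refl \<theta> x) * Im (bisector_refl \<theta> y)))"
  using sector_broken_line_INF[OF assms] by (simp add: sG_def)

text \<open>In the application a and e are the smaller edge distances of x and y, p and q their
  distances to the bisector, and h = cos (\<theta>/2).\<close>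

lemma mixed_min_bound:
  fixes a e p q h D :: real
  assumes "0 \<le> a" "0 \<le> e" "0 \<le> p" "0 \<le> q" "0 \<le> h" "(p + q)\<^sup>2 \<le> D"
  shows "D + 4 * min (a * (e + 2 * h * q)) ((a + 2 * h * p) * e) \<le> (1 + h) * (D + 4 * (a * e))"
proof -
  define m where "m = min (a * q) (e * p)"
  have "min (a * (e + 2 * h * q)) ((a + 2 * h * p) * e)
      = min (a * e + 2 * h * (a * q)) (a * e + 2 * h * (e * p))"
    by (simp add: algebra_simps)
  also have "\<dots> = a * e + 2 * h * m"
    using assms by (simp add: m_def min_add_distrib_right min_mult_distrib_left)
  finally have min_eq: "min (a * (e + 2 * h * q)) ((a + 2 * h * p) * e) = a * e + 2 * h * m" .
  have "m\<^sup>2 \<le> (a * q) * (e * p)"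
    unfolding power2_eq_square m_def using assms by (intro mult_mono) auto
  then have "2 * m \<le> a * e + p * q"
    using assms by (intro two_mult_le_add_if_sq_le_mult) (simp_all add: mult_ac)
  moreover have "4 * (p * q) \<le> (p + q)\<^sup>2"
    using zero_le_power2[of "p - q"] by (simp add: power2_eq_square algebra_simps)
  ultimately have "h * (8 * m) \<le> h * (D + 4 * (a * e))"
    using assms by (intro mult_left_mono) simp_all
  then show ?thesis
    unfolding min_eq by (simp add: algebra_simps)
qed

lemma Im_bisector_refl_sub_Im:
  "Im (bisector_refl \<theta> z) - Im z = 2 * cos (\<theta> / 2) * Im (bisector_refl (\<theta> / 2) z)"
proof -
  have "sin \<theta> = 2 * sin (\<theta> / 2) * cos (\<theta> / 2)" "1 + cos \<theta> = 2 * (cos (\<theta> / 2))\<^sup>2"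
    using sin_double[of "\<theta> / 2"] cos_double_cos[of "\<theta> / 2"] by simp_all
  moreover have "Im (bisector_refl \<theta> z) - Im z = Re z * sin \<theta> - Im z * (1 + cos \<theta>)"
    by (simp add: Im_bisector_refl algebra_simps)
  ultimately show ?thesis
    by (simp add: Im_bisector_refl algebra_simps power2_eq_square)
qed

lemma sector_mirror_bound_opposite_sides:
  assumes th: "0 < \<theta>" "\<theta> < pi" and xy: "x \<in> sector \<theta>" "y \<in> sector \<theta>"
    and "Im x \<le> Im (bisector_refl \<theta> x)" "Im (bisector_refl \<theta> y) \<le> Im y"
  shows "(cmod (x - y))\<^sup>2 + 4 * min (Im x * Im y) (Im (bisector_refl \<theta> x) * Im (bisector_refl \<theta> y))
    \<le> (1 + cos (\<theta> / 2)) * ((cmod (x - y))\<^sup>2 + 4 * (Im x * Im (bisector_refl \<theta> y)))"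
proof -
  \<comment> \<open>x and y lie on opposite sides of the bisector, at distances p and q from it\<close>
  define p q where "p = Im (bisector_refl (\<theta> / 2) x)" and "q = - Im (bisector_refl (\<theta> / 2) y)"
  have "0 < cos (\<theta> / 2)"
    using th by (intro cos_gt_zero_pi) auto
  have rx: "Im (bisector_refl \<theta> x) = Im x + 2 * cos (\<theta> / 2) * p"
    and y: "Im y = Im (bisector_refl \<theta> y) + 2 * cos (\<theta> / 2) * q"
    using Im_bisector_refl_sub_Im[of \<theta> x] Im_bisector_refl_sub_Im[of \<theta> y]
    by (simp_all add: p_def q_def)
  have "0 \<le> p" "0 \<le> q"
    using assms(5,6) rx y \<open>0 < cos (\<theta> / 2)\<close> by (simp_all add: zero_le_mult_iff)
  moreover have "p + q \<le> cmod (x - y)"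
    using abs_Im_bisector_refl_diff_le[of "\<theta> / 2" x y] by (simp add: p_def q_def)
  ultimately have "(p + q)\<^sup>2 \<le> (cmod (x - y))\<^sup>2"
    by (intro power_mono) simp_all
  then show ?thesis
    using mixed_min_bound[of "Im x" "Im (bisector_refl \<theta> y)" p q "cos (\<theta> / 2)"] xy th
      \<open>0 \<le> p\<close> \<open>0 \<le> q\<close> \<open>0 < cos (\<theta> / 2)\<close>
    by (simp add: rx y sector_iff)
qed

lemma sector_mirror_bound:
  assumes th: "0 < \<theta>" "\<theta> < pi" and xy: "x \<in> sector \<theta>" "y \<in> sector \<theta>"
  shows "(cmod (x - y))\<^sup>2 + 4 * min (Im x * Im y) (Im (bisector_refl \<theta> x) * Im (bisector_refl \<theta> y))
    \<le> (1 + cos (\<theta> / 2)) * ((cmod (x - y))\<^sup>2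
        + 4 * (min (Im x) (Im (bisector_refl \<theta> x)) * min (Im y) (Im (bisector_refl \<theta> y))))"
proof -
  let ?r = "bisector_refl \<theta>"
  have "0 < cos (\<theta> / 2)"
    using th by (intro cos_gt_zero_pi) auto
  have pos: "0 < Im x" "0 < Im y" "0 < Im (?r x)" "0 < Im (?r y)"
    using xy th by (simp_all add: sector_iff)
  have same_side: "D + 4 * min P Q \<le> (1 + cos (\<theta> / 2)) * (D + 4 * R)"
    if "min P Q \<le> R" "0 \<le> R" "0 \<le> D" for P Q R D :: real
  proof -
    have "0 \<le> cos (\<theta> / 2) * (D + 4 * R)"
      using that \<open>0 < cos (\<theta> / 2)\<close> by simp
    then show ?thesis
      using that by (simp add: algebra_simps)
  qed
  consider "Im x \<le> Im (?r x)" "Im y \<le> Im (?r y)" | "Im (?r x) \<le> Im x" "Im (?r y) \<le> Im y"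
    | "Im x \<le> Im (?r x)" "Im (?r y) \<le> Im y" | "Im (?r x) \<le> Im x" "Im y \<le> Im (?r y)"
    by linarith
  then show ?thesis
  proof cases
    case 3
    then show ?thesis
      using sector_mirror_bound_opposite_sides[OF th xy] by simp
  next
    case 4
    then show ?thesis
      using sector_mirror_bound_opposite_sides[OF th xy(2,1)]
      by (simp add: norm_minus_commute mult.commute)
  qed (use pos in \<open>auto intro!: same_side\<close>)
qed

lemma sqrt2_cos_quarter_sq: "(sqrt 2 * cos (\<theta> / 4))\<^sup>2 = 1 + cos (\<theta> / 2)"
  using cos_double_cos[of "\<theta> / 4"] by (simp add: power_mult_distrib)

lemma divide_sqrt_le_divide_sqrt:
  fixes d K A B :: real
  assumes "0 \<le> d" "0 < K" "0 < A" "A \<le> K\<^sup>2 * B"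
  shows "d / sqrt B / K \<le> d / sqrt A"
proof -
  have "sqrt A \<le> sqrt (K\<^sup>2 * B)"
    using assms(4) by (rule real_sqrt_le_mono)
  also have "\<dots> = K * sqrt B"
    using \<open>0 < K\<close> by (simp add: real_sqrt_mult)
  finally have "sqrt A \<le> K * sqrt B" .
  moreover have "0 < sqrt A"
    using \<open>0 < A\<close> by simp
  moreover from calculation have "0 < K * sqrt B"
    by linarith
  ultimately have "d / (K * sqrt B) \<le> d / sqrt A"
    using \<open>0 \<le> d\<close> by (intro divide_left_mono) simp_all
  then show ?thesis
    by (simp add: mult.commute)
qed

lemma pG_le_sG_sector:
  assumes th: "0 < \<theta>" "\<theta> < pi" and xy: "x \<in> sector \<theta>" "y \<in> sector \<theta>"
  shows "pG (sector \<theta>) x y / (sqrt 2 * cos (\<theta> / 4)) \<le> sG (sector \<theta>) x y"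
proof -
  let ?r = "bisector_refl \<theta>"
  define d M P where "d = cmod (x - y)" and "M = min (Im x * Im y) (Im (?r x) * Im (?r y))"
    and "P = dG (sector \<theta>) x * dG (sector \<theta>) y"
  have pos: "0 < Im x" "0 < Im y" "0 < Im (?r x)" "0 < Im (?r y)"
    using xy th by (simp_all add: sector_iff)
  have "0 < cos (\<theta> / 2)"
    using th by (simp add: cos_gt_zero_pi)
  have "min (Im x) (Im (?r x)) * min (Im y) (Im (?r y)) \<le> P"
    unfolding P_def using pos dG_sector_ge[OF th xy(1)] dG_sector_ge[OF th xy(2)]
    by (intro mult_mono) simp_all
  then have "(1 + cos (\<theta> / 2)) * (d\<^sup>2 + 4 * (min (Im x) (Im (?r x)) * min (Im y) (Im (?r y))))
      \<le> (sqrt 2 * cos (\<theta> / 4))\<^sup>2 * (d\<^sup>2 + 4 * P)"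
    unfolding sqrt2_cos_quarter_sq using \<open>0 < cos (\<theta> / 2)\<close> by (intro mult_left_mono) simp_all
  with sector_mirror_bound[OF th xy] have "d\<^sup>2 + 4 * M \<le> (sqrt 2 * cos (\<theta> / 4))\<^sup>2 * (d\<^sup>2 + 4 * P)"
    unfolding d_def M_def by linarith
  moreover have "0 < d\<^sup>2 + 4 * M"
    using pos by (simp add: M_def add_nonneg_pos)
  ultimately have "d / sqrt (d\<^sup>2 + 4 * P) / (sqrt 2 * cos (\<theta> / 4)) \<le> d / sqrt (d\<^sup>2 + 4 * M)"
    using th by (intro divide_sqrt_le_divide_sqrt) (simp_all add: d_def cos_gt_zero_pi)
  then show ?thesis
    using sG_sector[OF th xy] by (simp add: pG_def d_def M_def P_def mult.assoc)
qed

lemma cmod_cis_diff: "cmod (cis a - cis b) = 2 * \<bar>sin ((a - b) / 2)\<bar>"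
proof (rule power2_eq_imp_eq)
  have "(cmod (cis a - cis b))\<^sup>2 = 2 - 2 * cos (a - b)"
    unfolding cmod_power2 using sin_cos_squared_add[of a] sin_cos_squared_add[of b]
    by (simp add: cos_diff power2_eq_square algebra_simps)
  also have "\<dots> = (2 * \<bar>sin ((a - b) / 2)\<bar>)\<^sup>2"
    using cos_double_sin[of "(a - b) / 2", unfolded mult_2 field_sum_of_halves]
    by (simp add: power_mult_distrib)
  finally show "(cmod (cis a - cis b))\<^sup>2 = (2 * \<bar>sin ((a - b) / 2)\<bar>)\<^sup>2" .
qed simp_all

lemma sG_sector_quarter_points:
  assumes th: "0 < \<theta>" "\<theta> < pi"
  shows "sG (sector \<theta>) (cis (\<theta> / 4)) (cis (3 * \<theta> / 4)) = 1 / (2 * cos (\<theta> / 4))"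
proof -
  define q x y where "q = \<theta> / 4" and "x = cis q" and "y = cis (3 * q)"
  have "0 < sin q" "0 < sin (2 * q)"
    using th by (simp_all add: q_def sin_gt_zero)
  have xy: "x \<in> sector \<theta>" "y \<in> sector \<theta>"
    using th by (simp_all add: x_def y_def q_def cis_in_sector)
  have "min (Im x * Im y) (Im (bisector_refl \<theta> x) * Im (bisector_refl \<theta> y)) = Im x * Im y"
    by (simp add: x_def y_def q_def bisector_refl_cis mult.commute)
  then have "sG (sector \<theta>) x y = cmod (x - y) / cmod (x - cnj y)"
    using sG_sector[OF th xy] by (simp add: cmod_diff_cnj_eq_sqrt)
  also have "\<dots> = 2 * sin q / (2 * sin (2 * q))"
    using \<open>0 < sin q\<close> \<open>0 < sin (2 * q)\<close>
    by (simp add: x_def y_def cis_cnj cmod_cis_diff)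
  also have "\<dots> = 1 / (2 * cos q)"
    using \<open>0 < sin q\<close> by (simp add: sin_double)
  finally show ?thesis
    by (simp only: x_def y_def q_def times_divide_eq_right)
qed

lemma pG_sector_quarter_points_ge:
  assumes th: "0 < \<theta>" "\<theta> < pi"
  shows "1 / sqrt 2 \<le> pG (sector \<theta>) (cis (\<theta> / 4)) (cis (3 * \<theta> / 4))"
proof -
  define q x y where "q = \<theta> / 4" and "x = cis q" and "y = cis (3 * q)"
  have "0 < sin q" "0 < cos q"
    using th by (simp_all add: q_def sin_gt_zero cos_gt_zero_pi)
  have "y = bisector_refl \<theta> x"
    by (simp add: x_def y_def q_def bisector_refl_cis)
  have x_foot: "cmod (x - of_real (cos q)) = sin q"
    using \<open>0 < sin q\<close> by (simp add: x_def cmod_def)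
  \<comment> \<open>cos q and its mirror image are the feet of the perpendiculars from x and y to the edges\<close>
  have "dG (sector \<theta>) x \<le> sin q"
    unfolding dG_def using edges_in_frontier_sector(1)[OF th, of "cos q"] \<open>0 < cos q\<close> x_foot
    by (intro infdist_le2) (auto simp: dist_norm)
  moreover have "dG (sector \<theta>) y \<le> sin q"
    unfolding dG_def using edges_in_frontier_sector(2)[OF th, of "cos q"] \<open>0 < cos q\<close> x_foot
    by (intro infdist_le2) (auto simp: dist_norm \<open>y = bisector_refl \<theta> x\<close> dist_bisector_refl)
  ultimately have "dG (sector \<theta>) x * dG (sector \<theta>) y \<le> sin q * sin q"
    using \<open>0 < sin q\<close> by (intro mult_mono) (simp_all add: dG_def infdist_nonneg)
  moreover have d: "cmod (x - y) = 2 * sin q"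
    using \<open>0 < sin q\<close> by (simp add: x_def y_def cmod_cis_diff)
  ultimately have "(cmod (x - y))\<^sup>2 + 4 * dG (sector \<theta>) x * dG (sector \<theta>) y
      \<le> 8 * (sin q * sin q)"
    by (simp add: power2_eq_square mult.assoc)
  also have "\<dots> = (sqrt 2 * cmod (x - y))\<^sup>2"
    by (simp add: d power_mult_distrib power2_eq_square)
  finally have "sqrt ((cmod (x - y))\<^sup>2 + 4 * dG (sector \<theta>) x * dG (sector \<theta>) y)
      \<le> sqrt 2 * cmod (x - y)"
    by (intro real_le_lsqrt) simp_all
  moreover have "0 < (cmod (x - y))\<^sup>2 + 4 * dG (sector \<theta>) x * dG (sector \<theta>) y"
    using d \<open>0 < sin q\<close> by (simp add: add_pos_nonneg dG_def infdist_nonneg)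
  ultimately have "cmod (x - y) / (sqrt 2 * cmod (x - y)) \<le> pG (sector \<theta>) x y"
    unfolding pG_def using d \<open>0 < sin q\<close> by (intro divide_left_mono) (simp_all add: mult_pos_pos)
  moreover have "cmod (x - y) / (sqrt 2 * cmod (x - y)) = 1 / sqrt 2"
    using d \<open>0 < sin q\<close> by simp
  ultimately have "1 / sqrt 2 \<le> pG (sector \<theta>) x y"
    by linarith
  then show ?thesis
    by (simp only: x_def y_def q_def times_divide_eq_right)
qed

lemma sector_pG_sG_bound_sharp:
  assumes th: "0 < \<theta>" "\<theta> < pi" and c: "1 / (sqrt 2 * cos (\<theta> / 4)) < c"
  shows "\<exists>x\<in>sector \<theta>. \<exists>y\<in>sector \<theta>. sG (sector \<theta>) x y < c * pG (sector \<theta>) x y"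
proof (intro bexI)
  have "0 < cos (\<theta> / 4)"
    using th by (simp add: cos_gt_zero_pi)
  then have "0 < 1 / (sqrt 2 * cos (\<theta> / 4))"
    by simp
  with c have "0 < c"
    by linarith
  have "sG (sector \<theta>) (cis (\<theta> / 4)) (cis (3 * \<theta> / 4)) = 1 / (sqrt 2 * cos (\<theta> / 4)) / sqrt 2"
    by (simp add: sG_sector_quarter_points[OF th])
  also have "\<dots> < c / sqrt 2"
    using divide_strict_right_mono[OF c, of "sqrt 2"] by simp
  also have "\<dots> \<le> c * pG (sector \<theta>) (cis (\<theta> / 4)) (cis (3 * \<theta> / 4))"
    using mult_left_mono[OF pG_sector_quarter_points_ge[OF th], of c] \<open>0 < c\<close> by simp
  finally show "sG (sector \<theta>) (cis (\<theta> / 4)) (cis (3 * \<theta> / 4))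
      < c * pG (sector \<theta>) (cis (\<theta> / 4)) (cis (3 * \<theta> / 4))" .
  show "cis (\<theta> / 4) \<in> sector \<theta>" "cis (3 * \<theta> / 4) \<in> sector \<theta>"
    using th by (simp_all add: cis_in_sector)
qed

theorem theorem3p8:
  fixes \<theta> :: real
  assumes "0 < \<theta>" and "\<theta> < pi"
  shows "(\<forall>x\<in>sector \<theta>. \<forall>y\<in>sector \<theta>.
            pG (sector \<theta>) x y / (sqrt 2 * cos (\<theta> / 4)) \<le> sG (sector \<theta>) x y)
       \<and> (\<forall>c > 1 / (sqrt 2 * cos (\<theta> / 4)). \<exists>x\<in>sector \<theta>. \<exists>y\<in>sector \<theta>.
            c * pG (sector \<theta>) x y > sG (sector \<theta>) x y)"
  using pG_le_sG_sector[OF assms] sector_pG_sG_bound_sharp[OF assms] by blast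

end
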